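(* Let $R=(S^0,\dots,S^T)$ be any $T$-covering in a symmetric congestion game in which every delay function is $f(x)=x$. Then $C(S^T)\le 2\Gamma(R)$.
   Context: A congestion game has players $N=\{1,\dots,n\}$, a finite resource set $E$ and strategy sets $\Sigma_i\subseteq 2^E$; it is symmetric if all $\Sigma_i$ equal a common set $\Sigma$. For a profile $S=(s_1,\dots,s_n)$, $n_e(S)=|\{i:e\in s_i\}|$. Here all delays are $f(x)=x$, so $c_i(S)=\sum_{e\in s_i}n_e(S)$ and $C(S)=\sum_i c_i(S)=\sum_{e\in E}n_e(S)^2$. Fix an optimal profile $S^*$ minimizing $C$. A best response of player $i$ in $S$ is a strategy $s_i^b\in\Sigma_i$ minimizing $c_i(S_{-i},\cdot)$ (where $(S_{-i},s_i')$ replaces $s_i$ by $s_i'$); if no strategy strictly decreases $i$'s cost, the best response is $s_i$ itself. A $T$-covering is a sequence of profiles $R=(S^0,\dots,S^T)$ with players $\pi(1),\dots,\pi(T)$ such that for each $1\le t\le T$, $S^t=(S^{t-1}_{-\pi(t)},s')$ with $s'$ a best response of $\pi(t)$ in $S^{t-1}$, and every player occurs at least once among $\pi(1),\dots,\pi(T)$. For each player $i$, $\mathrm{last}(i)=\max\{t:\pi(t)=i\}$. Define $\Gamma(R)=\frac1n\sum_{i=1}^n\sum_{e\in E}n_e(S^* )\bigl(n_e(S^{\mathrm{last}(i)-1})+1\bigr)$. *)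

theory Defs
  imports Complex_Main
begin

text \<open>Players are 1..n; a profile is a function from players to strategies
(sets of resources). Values outside 1..n are irrelevant.\<close>

type_synonym 'e profile = "nat \<Rightarrow> 'e set"

definition load :: "nat \<Rightarrow> 'e profile \<Rightarrow> 'e \<Rightarrow> nat" where
  "load n S e = card {j \<in> {1..n}. e \<in> S j}"

definition pcost :: "nat \<Rightarrow> 'e profile \<Rightarrow> nat \<Rightarrow> nat" where
  "pcost n S i = (\<Sum>e\<in>S i. load n S e)"

definition social_cost :: "nat \<Rightarrow> 'e profile \<Rightarrow> nat" where
  "social_cost n S = (\<Sum>i\<in>{1..n}. pcost n S i)"

definition valid_profile :: "nat \<Rightarrow> 'e set set \<Rightarrow> 'e profile \<Rightarrow> bool" where
  "valid_profile n \<Sigma> S \<longleftrightarrow> (\<forall>i\<in>{1..n}. S i \<in> \<Sigma>)"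

definition optimal_profile :: "nat \<Rightarrow> 'e set set \<Rightarrow> 'e profile \<Rightarrow> bool" where
  "optimal_profile n \<Sigma> Sopt \<longleftrightarrow> valid_profile n \<Sigma> Sopt \<and>
     (\<forall>S. valid_profile n \<Sigma> S \<longrightarrow> social_cost n Sopt \<le> social_cost n S)"

definition best_response :: "nat \<Rightarrow> 'e set set \<Rightarrow> 'e profile \<Rightarrow> nat \<Rightarrow> 'e set \<Rightarrow> bool" where
  "best_response n \<Sigma> S i s' \<longleftrightarrow> s' \<in> \<Sigma> \<and>
     (\<forall>s''\<in>\<Sigma>. pcost n (S(i := s')) i \<le> pcost n (S(i := s'')) i) \<and>
     ((\<forall>s''\<in>\<Sigma>. pcost n S i \<le> pcost n (S(i := s'')) i) \<longrightarrow> s' = S i)"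

definition is_covering :: "nat \<Rightarrow> 'e set set \<Rightarrow> nat \<Rightarrow> (nat \<Rightarrow> 'e profile) \<Rightarrow> (nat \<Rightarrow> nat) \<Rightarrow> bool" where
  "is_covering n \<Sigma> T S \<pi> \<longleftrightarrow> valid_profile n \<Sigma> (S 0) \<and>
     (\<forall>t\<in>{1..T}. \<pi> t \<in> {1..n} \<and> best_response n \<Sigma> (S (t - 1)) (\<pi> t) (S t (\<pi> t)) \<and>
        (\<forall>j\<in>{1..n}. j \<noteq> \<pi> t \<longrightarrow> S t j = S (t - 1) j)) \<and>
     (\<forall>i\<in>{1..n}. \<exists>t\<in>{1..T}. \<pi> t = i)"

definition last_move :: "nat \<Rightarrow> (nat \<Rightarrow> nat) \<Rightarrow> nat \<Rightarrow> nat" where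
  "last_move T \<pi> i = Max {t \<in> {1..T}. \<pi> t = i}"

definition Gamma :: "nat \<Rightarrow> 'e set \<Rightarrow> 'e profile \<Rightarrow> nat \<Rightarrow> (nat \<Rightarrow> 'e profile) \<Rightarrow> (nat \<Rightarrow> nat) \<Rightarrow> real" where
  "Gamma n E Sopt T S \<pi> = (1 / real n) *
     (\<Sum>i\<in>{1..n}. \<Sum>e\<in>E. real (load n Sopt e) * (real (load n (S (last_move T \<pi> i - 1)) e) + 1))"

end

theory Submission imports Defs begin

(* Write L i for the last time player i moves in the covering.
   (1) Best-response bound: when i moves at time L i it could instead have
       played any optimal strategy Sopt j; deviating raises each load by at
       most one, so n * c_i(S^{L i}) <= sum_e n_e(Sopt) (n_e(S^{L i - 1}) + 1).
       Summing over i gives n * sum_i c_i(S^{L i}) <= n * Gamma.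
   (2) Potential bound: order the users of a resource e in S^T by their last
       move.  Sum of ranks 1 + ... + k = k(k+1)/2 >= k^2/2, so
       C(S^T) <= 2 * sum_i sum_{e in s_i} (1 + #users of e moving before i).
       Players moving before i keep their final strategy from time L i on,
       hence that count is at most n_e(S^{L i}), giving
       C(S^T) <= 2 * sum_i c_i(S^{L i}). *)

lemma load_cong: "(\<forall>j\<in>{1..n}. S j = S' j) \<Longrightarrow> load n S e = load n S' e"
  unfolding load_def by (rule arg_cong[where f=card]) auto

lemma pcost_cong:
  "i \<in> {1..n} \<Longrightarrow> (\<forall>j\<in>{1..n}. S j = S' j) \<Longrightarrow> pcost n S i = pcost n S' i"
  unfolding pcost_def using load_cong[of n S S'] by (auto intro: sum.cong)

lemma load_upd: "load n (S(i := x)) e \<le> load n S e + 1"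
proof -
  have "{j \<in> {1..n}. e \<in> (S(i := x)) j} \<subseteq> insert i {j \<in> {1..n}. e \<in> S j}" by auto
  hence "card {j \<in> {1..n}. e \<in> (S(i := x)) j} \<le> card (insert i {j \<in> {1..n}. e \<in> S j})"
    by (intro card_mono) auto
  also have "\<dots> \<le> card {j \<in> {1..n}. e \<in> S j} + 1" by (simp add: card_insert_if)
  finally show ?thesis unfolding load_def .
qed

lemma sum_swap_members:
  fixes g :: "'j \<Rightarrow> 'e \<Rightarrow> 'a::comm_monoid_add"
  assumes "finite E" "finite J" "\<forall>j\<in>J. A j \<subseteq> E"
  shows "(\<Sum>j\<in>J. \<Sum>e\<in>A j. g j e) = (\<Sum>e\<in>E. \<Sum>j\<in>{j\<in>J. e \<in> A j}. g j e)"
proof -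
  have "(\<Sum>j\<in>J. \<Sum>e\<in>A j. g j e) = (\<Sum>j\<in>J. \<Sum>e\<in>E. if e \<in> A j then g j e else 0)"
  proof (rule sum.cong[OF refl])
    fix j assume "j \<in> J"
    hence "A j = {e\<in>E. e \<in> A j}" using assms(3) by auto
    thus "(\<Sum>e\<in>A j. g j e) = (\<Sum>e\<in>E. if e \<in> A j then g j e else 0)"
      using sum.inter_filter[OF assms(1), of "g j" "\<lambda>e. e \<in> A j"] by simp
  qed
  also have "\<dots> = (\<Sum>e\<in>E. \<Sum>j\<in>J. if e \<in> A j then g j e else 0)" by (rule sum.swap)
  also have "\<dots> = (\<Sum>e\<in>E. \<Sum>j\<in>{j\<in>J. e \<in> A j}. g j e)"
    by (rule sum.cong[OF refl], rule sum.inter_filter[OF assms(2), symmetric])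
  finally show ?thesis .
qed

lemma rank_sum:
  fixes f :: "'a \<Rightarrow> 'b::linorder"
  assumes "finite A" and "inj_on f A"
  shows "2 * (\<Sum>a\<in>A. card {b\<in>A. f b < f a} + 1) = card A * (card A + 1)"
  using assms
proof (induction A rule: finite_ranking_induct[where f=f])
  case empty then show ?case by simp
next
  case (insert x A)
  show ?case
  proof (cases "x \<in> A")
    case True then show ?thesis using insert by (simp add: insert_absorb)
  next
    case False
    have inj: "inj_on f A" using insert.prems by (auto simp: inj_on_def)
    have below: "f y < f x" if "y \<in> A" for y
      using insert.prems insert.hyps(2)[OF that] False that
      by (metis inj_on_def insertCI order_le_neq_trans)
    have "(\<Sum>a\<in>insert x A. card {b\<in>insert x A. f b < f a} + 1)
       = card A + 1 + (\<Sum>a\<in>A. card {b\<in>A. f b < f a} + 1)"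
    proof -
      have "{b\<in>insert x A. f b < f x} = A" using below by auto
      moreover have "{b\<in>insert x A. f b < f a} = {b\<in>A. f b < f a}" if "a \<in> A" for a
        using below that by fastforce
      ultimately show ?thesis using False insert.hyps(1) by (simp add: sum.insert)
    qed
    then show ?thesis using insert.IH[OF inj] False insert.hyps(1) by (simp add: algebra_simps)
  qed
qed

lemma social_cost_rank_bound:
  fixes L :: "nat \<Rightarrow> 'b::linorder"
  assumes "finite E" "\<forall>i\<in>{1..n}. Q i \<subseteq> E" "inj_on L {1..n}"
  shows "social_cost n Q
    \<le> 2 * (\<Sum>i\<in>{1..n}. \<Sum>e\<in>Q i. card {j\<in>{1..n}. e \<in> Q j \<and> L j < L i} + 1)"
proof -
  define U where "U e = {j\<in>{1..n}. e \<in> Q j}" for e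
  have fin: "finite (U e)" for e unfolding U_def by auto
  have "social_cost n Q = (\<Sum>e\<in>E. \<Sum>i\<in>U e. card (U e))"
    unfolding social_cost_def pcost_def load_def U_def
    by (rule sum_swap_members[OF assms(1)]) (use assms(2) in auto)
  also have "\<dots> \<le> (\<Sum>e\<in>E. 2 * (\<Sum>i\<in>U e. card {j\<in>U e. L j < L i} + 1))"
  proof (rule sum_mono)
    fix e
    have "inj_on L (U e)" using assms(3) by (rule inj_on_subset) (auto simp: U_def)
    from rank_sum[OF fin this]
    show "(\<Sum>i\<in>U e. card (U e)) \<le> 2 * (\<Sum>i\<in>U e. card {j\<in>U e. L j < L i} + 1)" by simp
  qed
  also have "\<dots> = 2 * (\<Sum>i\<in>{1..n}. \<Sum>e\<in>Q i. card {j\<in>U e. L j < L i} + 1)"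
    unfolding sum_distrib_left[symmetric] U_def
    by (rule arg_cong[where f="(*) 2"], rule sum_swap_members[OF assms(1), symmetric])
       (use assms(2) in auto)
  finally show ?thesis by (simp add: U_def conj_ac)
qed

text \<open>Best-response bound: a player who best-responds in S is at least as well
  off as when switching to any strategy P j of a valid profile P; averaging over
  the n strategies of P gives the weighted bound with weights n_e(P).\<close>

lemma best_response_vs_profile:
  assumes "finite E" "\<forall>s\<in>\<Sigma>. s \<subseteq> E"
    and br: "best_response n \<Sigma> S i s'" and P: "valid_profile n \<Sigma> P"
  shows "n * pcost n (S(i := s')) i \<le> (\<Sum>e\<in>E. load n P e * (load n S e + 1))"
proof -
  have P_in: "P j \<in> \<Sigma>" if "j \<in> {1..n}" for j using P that unfolding valid_profile_def by auto
  have vs_j: "pcost n (S(i := s')) i \<le> (\<Sum>e\<in>P j. load n S e + 1)" if "j \<in> {1..n}" for j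
  proof -
    have "pcost n (S(i := s')) i \<le> pcost n (S(i := P j)) i"
      using br P_in[OF that] unfolding best_response_def by auto
    also have "\<dots> = (\<Sum>e\<in>P j. load n (S(i := P j)) e)" unfolding pcost_def by simp
    also have "\<dots> \<le> (\<Sum>e\<in>P j. load n S e + 1)" by (rule sum_mono) (rule load_upd)
    finally show ?thesis .
  qed
  have "n * pcost n (S(i := s')) i = (\<Sum>j\<in>{1..n}. pcost n (S(i := s')) i)" by simp
  also have "\<dots> \<le> (\<Sum>j\<in>{1..n}. \<Sum>e\<in>P j. load n S e + 1)" by (rule sum_mono) (rule vs_j)
  also have "\<dots> = (\<Sum>e\<in>E. \<Sum>j\<in>{j\<in>{1..n}. e \<in> P j}. load n S e + 1)"
    by (rule sum_swap_members[OF assms(1)]) (use P_in assms(2) in auto)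
  also have "\<dots> = (\<Sum>e\<in>E. load n P e * (load n S e + 1))" unfolding load_def by simp
  finally show ?thesis .
qed

locale covering =
  fixes n :: nat and \<Sigma> :: "'e set set" and T :: nat
    and S :: "nat \<Rightarrow> 'e profile" and \<pi> :: "nat \<Rightarrow> nat"
  assumes is_covering: "is_covering n \<Sigma> T S \<pi>"
begin

abbreviation L :: "nat \<Rightarrow> nat" where "L \<equiv> last_move T \<pi>"

lemma move:
  assumes "t \<in> {1..T}"
  shows "\<pi> t \<in> {1..n}" "best_response n \<Sigma> (S (t - 1)) (\<pi> t) (S t (\<pi> t))"
    "\<And>j. j \<in> {1..n} \<Longrightarrow> j \<noteq> \<pi> t \<Longrightarrow> S t j = S (t - 1) j"
  using is_covering assms unfolding is_covering_def by auto

lemma profile_valid: "t \<le> T \<Longrightarrow> j \<in> {1..n} \<Longrightarrow> S t j \<in> \<Sigma>"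
proof (induction t)
  case 0
  then show ?case using is_covering unfolding is_covering_def valid_profile_def by auto
next
  case (Suc t)
  then have st: "Suc t \<in> {1..T}" by auto
  show ?case
    using move[OF st] Suc unfolding best_response_def by (cases "j = \<pi> (Suc t)") auto
qed

lemma last_move:
  assumes "i \<in> {1..n}"
  shows "L i \<in> {1..T}" "\<pi> (L i) = i" "\<And>t. t \<in> {1..T} \<Longrightarrow> \<pi> t = i \<Longrightarrow> t \<le> L i"
proof -
  have "\<exists>t\<in>{1..T}. \<pi> t = i" using is_covering assms unfolding is_covering_def by blast
  then have ne: "{t \<in> {1..T}. \<pi> t = i} \<noteq> {}" by auto
  have fin: "finite {t \<in> {1..T}. \<pi> t = i}" by auto
  show "L i \<in> {1..T}" "\<pi> (L i) = i" "\<And>t. t \<in> {1..T} \<Longrightarrow> \<pi> t = i \<Longrightarrow> t \<le> L i"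
    using Max_in[OF fin ne] Max_ge[OF fin] unfolding last_move_def by auto
qed

lemma inj_last_move: "inj_on L {1..n}"
  by (rule inj_onI) (metis last_move(2))

lemma strategy_final:
  assumes j: "j \<in> {1..n}" and "L j \<le> t" "t \<le> T"
  shows "S t j = S T j"
proof -
  have keep: "S t j = S (L j) j" if "L j \<le> t" "t \<le> T" for t
    using that
  proof (induction t rule: dec_induct)
    case base then show ?case by simp
  next
    case (step t)
    have st: "Suc t \<in> {1..T}" using step.prems by auto
    have "\<pi> (Suc t) \<noteq> j" using last_move(3)[OF j st] step.hyps(1) by fastforce
    then show ?case using move(3)[OF st j] step by simp
  qed
  show ?thesis using keep[OF assms(2,3)] keep[of T] last_move(1)[OF j] by simp
qed

lemma last_move_cost:
  assumes "finite E" "\<forall>s\<in>\<Sigma>. s \<subseteq> E" "valid_profile n \<Sigma> P" and i: "i \<in> {1..n}"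
  shows "n * pcost n (S (L i)) i \<le> (\<Sum>e\<in>E. load n P e * (load n (S (L i - 1)) e + 1))"
proof -
  note t = last_move(1,2)[OF i]
  have "pcost n (S (L i)) i = pcost n ((S (L i - 1))(i := S (L i) i)) i"
    by (rule pcost_cong[OF i]) (use move(3)[OF t(1)] t(2) in auto)
  moreover have "best_response n \<Sigma> (S (L i - 1)) i (S (L i) i)" using move(2)[OF t(1)] t(2) by simp
  ultimately show ?thesis using best_response_vs_profile[OF assms(1,2) _ assms(3)] by simp
qed

text \<open>Part (2): users of e in S^T moving before i still use e at time L i.\<close>

lemma earlier_users_le_load:
  assumes i: "i \<in> {1..n}" and e: "e \<in> S T i"
  shows "card {j\<in>{1..n}. e \<in> S T j \<and> L j < L i} + 1 \<le> load n (S (L i)) e"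
proof -
  have LT: "L i \<le> T" using last_move(1)[OF i] by simp
  have "insert i {j\<in>{1..n}. e \<in> S T j \<and> L j < L i} \<subseteq> {j\<in>{1..n}. e \<in> S (L i) j}"
    using strategy_final[OF _ _ LT] i e by (auto dest: less_imp_le)
  hence "card (insert i {j\<in>{1..n}. e \<in> S T j \<and> L j < L i}) \<le> load n (S (L i)) e"
    unfolding load_def by (intro card_mono) auto
  thus ?thesis by simp
qed

lemma social_cost_final_le:
  assumes "finite E" "\<forall>s\<in>\<Sigma>. s \<subseteq> E"
  shows "social_cost n (S T) \<le> 2 * (\<Sum>i\<in>{1..n}. pcost n (S (L i)) i)"
proof -
  have sub: "\<forall>i\<in>{1..n}. S T i \<subseteq> E" using profile_valid assms(2) by blast
  have "social_cost n (S T)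
      \<le> 2 * (\<Sum>i\<in>{1..n}. \<Sum>e\<in>S T i. card {j\<in>{1..n}. e \<in> S T j \<and> L j < L i} + 1)"
    by (rule social_cost_rank_bound[OF assms(1) sub inj_last_move])
  also have "\<dots> \<le> 2 * (\<Sum>i\<in>{1..n}. pcost n (S (L i)) i)"
  proof (intro mult_left_mono sum_mono)
    fix i assume i: "i \<in> {1..n}"
    have "S (L i) i = S T i" using strategy_final[OF i order_refl] last_move(1)[OF i] by simp
    then show "(\<Sum>e\<in>S T i. card {j\<in>{1..n}. e \<in> S T j \<and> L j < L i} + 1) \<le> pcost n (S (L i)) i"
      unfolding pcost_def using earlier_users_le_load[OF i] by (simp add: sum_mono)
  qed simp
  finally show ?thesis .
qed

end

text \<open>Main result: C(S^T) <= 2 Gamma(R).\<close>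

theorem lemma5:
  fixes n T :: nat and E :: "'e set" and \<Sigma> :: "'e set set"
    and Sopt :: "'e profile" and S :: "nat \<Rightarrow> 'e profile" and \<pi> :: "nat \<Rightarrow> nat"
  assumes "finite E"
    and "\<forall>s\<in>\<Sigma>. s \<subseteq> E"
    and "optimal_profile n \<Sigma> Sopt"
    and "is_covering n \<Sigma> T S \<pi>"
  shows "real (social_cost n (S T)) \<le> 2 * Gamma n E Sopt T S \<pi>"
proof -
  interpret covering n \<Sigma> T S \<pi> using assms(4) by (rule covering.intro)
  define G where "G i = (\<Sum>e\<in>E. load n Sopt e * (load n (S (L i - 1)) e + 1))" for i
  define A where "A = (\<Sum>i\<in>{1..n}. pcost n (S (L i)) i)"
  have "n * A \<le> (\<Sum>i\<in>{1..n}. G i)"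
    unfolding A_def G_def sum_distrib_left
    using assms(3) by (intro sum_mono last_move_cost[OF assms(1,2)]) (simp add: optimal_profile_def)
  hence "real n * real A \<le> real (\<Sum>i\<in>{1..n}. G i)" by (metis of_nat_le_iff of_nat_mult)
  moreover have "Gamma n E Sopt T S \<pi> = (\<Sum>i\<in>{1..n}. G i) / real n"
    unfolding Gamma_def G_def by (simp add: algebra_simps)
  ultimately have "n > 0 \<Longrightarrow> real A \<le> Gamma n E Sopt T S \<pi>"
    by (simp add: pos_le_divide_eq mult.commute)
  moreover have "real (social_cost n (S T)) \<le> 2 * real A"
    using social_cost_final_le[OF assms(1,2)] unfolding A_def by linarith
  moreover have "n = 0 \<Longrightarrow> social_cost n (S T) = 0" by (simp add: social_cost_def)
  ultimately show ?thesis by (cases "n = 0") (auto simp: Gamma_def)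
qed

end
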